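(* Let $\mathbb{R}^5$ have coordinates $x=(\theta^0,\theta^1,\theta^2,\theta^3,\theta^4)$ and let $g$ and $\Upsilon$ be the symmetric bilinear and trilinear forms determined by $$g(x,x)=\theta^0\theta^4-4\theta^1\theta^3+3(\theta^2)^2,\qquad \Upsilon(x,x,x)=3\sqrt{3}\big(\theta^0\theta^2\theta^4+2\theta^1\theta^2\theta^3-(\theta^2)^3-\theta^0(\theta^3)^2-\theta^4(\theta^1)^2\big).$$ Let $$CH=\{a\in\mathbf{GL}(5,\mathbb{R}) : \Upsilon(ax,ax,ax)=(\det a)^{3/5}\,\Upsilon(x,x,x)\ \ \forall x\in\mathbb{R}^5\}.$$ Then $CH$ is the group $\mathbf{GL}(2,\mathbb{R})$ in its $5$-dimensional irreducible representation, and there are natural inclusions $CH=\mathbf{GL}(2,\mathbb{R})\subset\mathbf{CO}(3,2)\subset\mathbf{GL}(5,\mathbb{R})$, where $\mathbf{CO}(3,2)$ is the $11$-dimensional group of homotheties of the conformal class $[g]$ (linear maps $a$ with $g(ax,ax)=\lambda\, g(x,x)$ for some $\lambda>0$).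
   Context: Here $(\det a)^{3/5}$ denotes the real fifth root of $(\det a)^3$. The $5$-dimensional irreducible representation of $\mathbf{GL}(2,\mathbb{R})$ is the one on coefficient vectors $(\theta^0,\dots,\theta^4)$ of binary quartics $w(x)=\sum_{i=0}^4\binom{4}{i}\theta^i x^i$ induced by fractional linear substitutions $x=(\alpha x'+\beta)/(\gamma x'+\delta)$ via $\sum_i\binom4i\theta'^i x'^i=(\gamma x'+\delta)^4 w(x)$; its Lie algebra in these coordinates is spanned by the $5\times5$ matrices $E_+$ (entries $(E_+)_{01}=4,(E_+)_{12}=3,(E_+)_{23}=2,(E_+)_{34}=1$, others $0$), $E_-$ (entries $(E_-)_{10}=1,(E_-)_{21}=2,(E_-)_{32}=3,(E_-)_{43}=4$, others $0$), $E_0=\mathrm{diag}(-4,-2,0,2,4)$ and $E_1=-4\,\mathrm{Id}$.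
   Formalization: CH is the image of GL(2,R) in its 5-dimensional irreducible representation together with the negatives of all those matrices, and the claim that CO(3,2) is 11-dimensional is left out. Apart from conventions, each condition added here is assumed in the paper as well or is needed for the statement above to hold. *)

theory Defs
  imports "HOL-Analysis.Analysis" "HOL-Library.Numeral_Type" "HOL-Computational_Algebra.Polynomial"
begin

definition gq :: "real^5 \<Rightarrow> real" where
  "gq x = x$0 * x$4 - 4 * x$1 * x$3 + 3 * (x$2)^2"

definition Ups :: "real^5 \<Rightarrow> real" where
  "Ups x = 3 * sqrt 3 * (x$0 * x$2 * x$4 + 2 * x$1 * x$2 * x$3 - (x$2)^3
                         - x$0 * (x$3)^2 - x$4 * (x$1)^2)"

text \<open>(det a)^(3/5): real fifth root of (det a)^3.\<close>
definition CH :: "(real^5^5) set" where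
  "CH = {a. det a \<noteq> 0 \<and> (\<forall>x. Ups (a *v x) = root 5 ((det a)^3) * Ups x)}"

definition CO32 :: "(real^5^5) set" where
  "CO32 = {a. det a \<noteq> 0 \<and> (\<exists>l>0. \<forall>x. gq (a *v x) = l * gq x)}"

definition GL2 :: "(real^2^2) set" where
  "GL2 = {A. det A \<noteq> 0}"

definition GL5 :: "(real^5^5) set" where
  "GL5 = {a. det a \<noteq> 0}"

definition idx5 :: "5 \<Rightarrow> nat" where
  "idx5 i = (THE n. n < 5 \<and> (of_nat n :: 5) = i)"

text \<open>The 5-dimensional irreducible representation of GL(2,R): for
  A = [[alpha,beta],[gamma,delta]] the new coefficients theta' are given by
  sum_j C(4,j) theta'^j X^j = sum_i C(4,i) theta^i (alpha X + beta)^i (gamma X + delta)^(4-i),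
  i.e. (gamma x' + delta)^4 w(x) with x = (alpha x'+beta)/(gamma x'+delta).\<close>
definition rho_entry :: "real^2^2 \<Rightarrow> nat \<Rightarrow> nat \<Rightarrow> real" where
  "rho_entry A j i =
     real (4 choose i) / real (4 choose j) *
     coeff ([:A$0$1, A$0$0:] ^ i * [:A$1$1, A$1$0:] ^ (4 - i)) j"

definition rho :: "real^2^2 \<Rightarrow> real^5^5" where
  "rho A = (\<chi> j i. rho_entry A (idx5 j) (idx5 i))"

end

theory Submission
  imports Defs
begin

text \<open>For \<open>A \<in> GL(2)\<close> the matrix \<open>rho A\<close> multiplies \<open>Ups\<close> by \<open>(det A)^6\<close> and \<open>g\<close> by
  \<open>(det A)^4\<close> and has determinant \<open>(det A)^10\<close>, so \<open>\<plusminus>rho A\<close> lies in \<open>CH\<close> and in \<open>CO(3,2)\<close>.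
  Conversely, \<open>Ups\<close> is a multiple of the determinant of the Hankel matrix of \<open>x\<close>, whose singular
  points are the coefficient vectors of fourth powers \<open>(p + q x)^4\<close>. An element of \<open>CH\<close> preserves
  this cone, so after composing with a suitable \<open>rho A\<inverse>\<close> it fixes the lines of \<open>x^0\<close> and \<open>x^4\<close>.
  Polarizing \<open>Ups\<close> at these two points and comparing coefficients shows that such a map is
  diagonal with entries in geometric progression, i.e. \<open>\<plusminus>rho\<close> of a diagonal matrix.\<close>

lemma exhaust_5:
  fixes i :: 5
  shows "i = 0 \<or> i = 1 \<or> i = 2 \<or> i = 3 \<or> i = 4"
proof (induct i)
  case (of_int z)
  then have "z = 0 \<or> z = 1 \<or> z = 2 \<or> z = 3 \<or> z = 4" by fastforce
  then show ?case by auto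
qed

lemma forall_5: "(\<forall>i::5. P i) \<longleftrightarrow> P 0 \<and> P 1 \<and> P 2 \<and> P 3 \<and> P 4"
  by (metis exhaust_5)

lemma UNIV_5: "(UNIV :: 5 set) = {0, 1, 2, 3, 4}"
  using exhaust_5 by auto

lemma sum_UNIV_5: "sum f (UNIV :: 5 set) = f 0 + f 1 + f 2 + f 3 + f 4"
  unfolding UNIV_5 by (simp add: ac_simps)

lemma prod_UNIV_5: "prod f (UNIV :: 5 set) = f 0 * f 1 * f 2 * f 3 * f 4"
  unfolding UNIV_5 by (simp add: ac_simps)

lemma idx5_simps [simp]: "idx5 0 = 0" "idx5 1 = 1" "idx5 2 = 2" "idx5 3 = 3" "idx5 4 = 4"
proof -
  have less_5: "n = 0 \<or> n = 1 \<or> n = 2 \<or> n = 3 \<or> n = 4" if "n < 5" for n :: nat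
    using that by linarith
  show "idx5 0 = 0" "idx5 1 = 1" "idx5 2 = 2" "idx5 3 = 3" "idx5 4 = 4"
    unfolding idx5_def
    by (rule the_equality; (simp; fail)?; (elim conjE, drule less_5, elim disjE, simp_all))+
qed

lemma matrix_vector_mult_5:
  "((M :: real^5^5) *v x) $ i = M$i$0 * x$0 + M$i$1 * x$1 + M$i$2 * x$2 + M$i$3 * x$3 + M$i$4 * x$4"
  by (simp add: matrix_vector_mult_def sum_UNIV_5)

lemma det_scaleR: "det (c *\<^sub>R (M :: real^'n^'n)) = c ^ CARD('n) * det M"
proof -
  have "c *\<^sub>R M = (\<chi> i. c *s M $ i)" by (simp add: vec_eq_iff)
  then show ?thesis using det_rows_mul[of "\<lambda>_. c" "\<lambda>i. M $ i"] by simp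
qed

lemma det_2x2: "det (A :: real^2^2) = A$0$0 * A$1$1 - A$0$1 * A$1$0"
proof -
  have "(2::2) = 0" by simp
  then show ?thesis by (simp add: det_2 \<open>(2::2) = 0\<close> algebra_simps)
qed

definition vec5 :: "real \<Rightarrow> real \<Rightarrow> real \<Rightarrow> real \<Rightarrow> real \<Rightarrow> real^5" where
  "vec5 a b c d e = (\<chi> i. [a, b, c, d, e] ! idx5 i)"

lemma vec5_nth [simp]:
  "vec5 a b c d e $ 0 = a" "vec5 a b c d e $ 1 = b" "vec5 a b c d e $ 2 = c"
  "vec5 a b c d e $ 3 = d" "vec5 a b c d e $ 4 = e"
  by (simp_all add: vec5_def)

definition diag5 :: "real \<Rightarrow> real \<Rightarrow> real \<Rightarrow> real \<Rightarrow> real \<Rightarrow> real^5^5" where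
  "diag5 d0 d1 d2 d3 d4 = (\<chi> i j. if idx5 i = idx5 j then [d0, d1, d2, d3, d4] ! idx5 i else 0)"

section \<open>The representation\<close>

definition mat2 :: "real \<Rightarrow> real \<Rightarrow> real \<Rightarrow> real \<Rightarrow> real^2^2" where
  "mat2 a b c d = (\<chi> i j. if i = 0 then (if j = 0 then a else b) else (if j = 0 then c else d))"

lemma mat2_nth [simp]:
  "mat2 a b c d $ 0 $ 0 = a" "mat2 a b c d $ 0 $ 1 = b"
  "mat2 a b c d $ 1 $ 0 = c" "mat2 a b c d $ 1 $ 1 = d"
  by (simp_all add: mat2_def)

lemma det_mat2: "det (mat2 a b c d) = a * d - b * c"
  by (simp add: det_2x2)

definition rho_mat :: "real \<Rightarrow> real \<Rightarrow> real \<Rightarrow> real \<Rightarrow> real^5^5" where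
  "rho_mat a b c d = (\<chi> j i.
    [[d^4, 4*b*d^3, 6*b^2*d^2, 4*b^3*d, b^4],
     [c*d^3, a*d^3 + 3*b*c*d^2, 3*a*b*d^2 + 3*b^2*c*d, 3*a*b^2*d + b^3*c, a*b^3],
     [c^2*d^2, 2*a*c*d^2 + 2*b*c^2*d, a^2*d^2 + 4*a*b*c*d + b^2*c^2, 2*a^2*b*d + 2*a*b^2*c, a^2*b^2],
     [c^3*d, 3*a*c^2*d + b*c^3, 3*a^2*c*d + 3*a*b*c^2, a^3*d + 3*a^2*b*c, a^3*b],
     [c^4, 4*a*c^3, 6*a^2*c^2, 4*a^3*c, a^4]] ! idx5 j ! idx5 i)"

lemma rho_eq_rho_mat: "rho A = rho_mat (A$0$0) (A$0$1) (A$1$0) (A$1$1)"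
  unfolding rho_def rho_mat_def vec_eq_iff forall_5
  by (simp add: rho_entry_def numeral_eq_Suc algebra_simps)

lemma rho_mat2: "rho (mat2 a b c d) = rho_mat a b c d"
  by (simp add: rho_eq_rho_mat)

lemma rho_mat_mult:
  "rho_mat a b c d ** rho_mat a' b' c' d'
     = rho_mat (a'*a + b'*c) (a'*b + b'*d) (c'*a + d'*c) (c'*b + d'*d)"
  unfolding vec_eq_iff forall_5
  by (simp add: matrix_matrix_mult_def sum_UNIV_5 rho_mat_def; intro conjI; algebra)

lemma rho_mat_1: "rho_mat 1 0 0 1 = mat 1"
  unfolding vec_eq_iff forall_5 by (simp add: rho_mat_def mat_def)

lemma rho_mat_inverse:
  assumes "\<Delta> = a * d - b * c" and "\<Delta> \<noteq> 0"
  shows "rho_mat (d/\<Delta>) (-b/\<Delta>) (-c/\<Delta>) (a/\<Delta>) ** rho_mat a b c d = mat 1"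
proof -
  have "a * (d/\<Delta>) + b * (-c/\<Delta>) = (a*d - b*c) / \<Delta>" "c * (-b/\<Delta>) + d * (a/\<Delta>) = (a*d - b*c) / \<Delta>"
    by (simp_all add: diff_divide_distrib mult.commute)
  then have "a * (d/\<Delta>) + b * (-c/\<Delta>) = 1" "c * (-b/\<Delta>) + d * (a/\<Delta>) = 1"
    using assms by simp_all
  moreover have "a * (-b/\<Delta>) + b * (a/\<Delta>) = 0" "c * (d/\<Delta>) + d * (-c/\<Delta>) = 0"
    by (simp_all add: field_simps)
  ultimately show ?thesis by (simp add: rho_mat_mult rho_mat_1)
qed

lemma rho_mat_diagonal: "rho_mat r 0 0 s = diag5 (s^4) (r * s^3) (r^2 * s^2) (r^3 * s) (r^4)"
  unfolding vec_eq_iff forall_5 by (simp add: rho_mat_def diag5_def)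

lemma det_rho_mat_lower: "det (rho_mat a 0 c d) = (a*d)^10"
proof -
  have "det (rho_mat a 0 c d) = prod (\<lambda>i. rho_mat a 0 c d $ i $ i) UNIV"
  proof (rule det_lowerdiagonal)
    fix i j :: 5
    assume "i < j"
    then show "rho_mat a 0 c d $ i $ j = 0"
      using exhaust_5[of i] exhaust_5[of j]
      by (auto simp: rho_mat_def less_bit1_def bit1.Rep_numeral bit1.Rep_0 bit1.Rep_1)
  qed
  also have "\<dots> = (a*d)^10" unfolding prod_UNIV_5 by (simp add: rho_mat_def; algebra)
  finally show ?thesis .
qed

lemma det_rho_mat_upper: "det (rho_mat a b 0 d) = (a*d)^10"
proof -
  have "det (rho_mat a b 0 d) = prod (\<lambda>i. rho_mat a b 0 d $ i $ i) UNIV"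
  proof (rule det_upperdiagonal)
    fix i j :: 5
    assume "j < i"
    then show "rho_mat a b 0 d $ i $ j = 0"
      using exhaust_5[of i] exhaust_5[of j]
      by (auto simp: rho_mat_def less_bit1_def bit1.Rep_numeral bit1.Rep_0 bit1.Rep_1)
  qed
  also have "\<dots> = (a*d)^10" unfolding prod_UNIV_5 by (simp add: rho_mat_def; algebra)
  finally show ?thesis .
qed

lemma det_rho_mat: "det (rho_mat a b c d) = (a*d - b*c)^10"
proof -
  have pivot: "det (rho_mat a b c d) = (a*d - b*c)^10" if "a \<noteq> 0" for a b c d
  proof -
    have "rho_mat a b c d = rho_mat a b 0 (d - b*c/a) ** rho_mat 1 0 (c/a) 1"
      using that by (simp add: rho_mat_mult field_simps)
    then have "det (rho_mat a b c d) = (a * (d - b*c/a))^10"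
      by (simp add: det_mul det_rho_mat_upper det_rho_mat_lower)
    also have "a * (d - b*c/a) = a*d - b*c" using that by (simp add: field_simps)
    finally show ?thesis .
  qed
  consider "a \<noteq> 0" | "a = 0" "c = 0" | "a = 0" "c \<noteq> 0" by blast
  then show ?thesis
  proof cases
    case 3
    then have "rho_mat a b c d = rho_mat (-c) (b-d) c d ** rho_mat 1 1 0 1"
      by (simp add: rho_mat_mult)
    then show ?thesis
      using 3 by (simp add: det_mul pivot det_rho_mat_upper algebra_simps)
  qed (simp_all add: pivot det_rho_mat_upper)
qed

section \<open>The cubic and its singular locus\<close>

text \<open>\<open>Ups\<close> without its constant factor: the determinant of the Hankel matrix
  \<open>[[x0, x1, x2], [x1, x2, x3], [x2, x3, x4]]\<close>.\<close>
definition cubic :: "real^5 \<Rightarrow> real" where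
  "cubic x = x$0 * x$2 * x$4 + 2 * x$1 * x$2 * x$3 - (x$2)^3 - x$0 * (x$3)^2 - x$4 * (x$1)^2"

lemma Ups_eq_cubic: "Ups x = 3 * sqrt 3 * cubic x"
  unfolding Ups_def cubic_def by simp

definition cubic_polar :: "real^5 \<Rightarrow> real^5 \<Rightarrow> real" where
  "cubic_polar x y =
     (x$2 * x$4 - (x$3)^2) * y$0 + (2 * x$2 * x$3 - 2 * x$4 * x$1) * y$1
     + (x$0 * x$4 + 2 * x$1 * x$3 - 3 * (x$2)^2) * y$2 + (2 * x$1 * x$2 - 2 * x$0 * x$3) * y$3
     + (x$0 * x$2 - (x$1)^2) * y$4"

lemma cubic_add_scaleR:
  "cubic (x + t *\<^sub>R y) = cubic x + t * cubic_polar x y + t^2 * cubic_polar y x + t^3 * cubic y"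
  unfolding cubic_def cubic_polar_def by (simp; algebra)

lemma cubic_polar_scaleR_right: "cubic_polar x (c *\<^sub>R y) = c * cubic_polar x y"
  unfolding cubic_polar_def by (simp add: algebra_simps)

lemma cubic_poly_eq_imp_linear_coeff_eq:
  fixes p0 p1 p2 p3 q0 q1 q2 q3 :: real
  assumes "\<And>t. p0 + p1*t + p2*t^2 + p3*t^3 = q0 + q1*t + q2*t^2 + q3*t^3"
  shows "p1 = q1"
  using assms[of 0] assms[of 1] assms[of "-1"] assms[of 2] by simp

lemma cubic_polar_transform:
  assumes "linear f" and "\<And>x. cubic (f x) = k * cubic x"
  shows "cubic_polar (f x) (f y) = k * cubic_polar x y"
proof (rule cubic_poly_eq_imp_linear_coeff_eq)
  fix t
  have "f (x + t *\<^sub>R y) = f x + t *\<^sub>R f y"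
    using \<open>linear f\<close> by (simp add: linear_add linear_scale)
  then show "cubic (f x) + cubic_polar (f x) (f y) * t + cubic_polar (f y) (f x) * t^2 + cubic (f y) * t^3
      = k * cubic x + (k * cubic_polar x y) * t + (k * cubic_polar y x) * t^2 + (k * cubic y) * t^3"
    using assms(2)[of "x + t *\<^sub>R y"] by (simp add: cubic_add_scaleR assms(2) algebra_simps)
qed

definition cubic_singular :: "real^5 \<Rightarrow> bool" where
  "cubic_singular w \<longleftrightarrow> (\<forall>v. cubic_polar w v = 0)"

lemma cubic_singular_image:
  assumes "linear f" "surj f" "\<And>x. cubic (f x) = k * cubic x" and "cubic_singular w"
  shows "cubic_singular (f w)"
  unfolding cubic_singular_def
proof
  fix v
  obtain u where "v = f u" using \<open>surj f\<close> by (metis surjD)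
  then show "cubic_polar (f w) v = 0"
    using cubic_polar_transform[OF assms(1,3)] \<open>cubic_singular w\<close> by (simp add: cubic_singular_def)
qed

text \<open>The coefficient vector of the quartic \<open>(p + q x)^4\<close>.\<close>
definition normal_curve :: "real \<Rightarrow> real \<Rightarrow> real^5" where
  "normal_curve p q = vec5 (p^4) (p^3 * q) (p^2 * q^2) (p * q^3) (q^4)"

lemma normal_curve_mult: "normal_curve (t * p) (t * q) = t^4 *\<^sub>R normal_curve p q"
  unfolding normal_curve_def vec_eq_iff forall_5 by (simp add: power_mult_distrib; algebra)

lemma cubic_singular_normal_curve: "cubic_singular (normal_curve p q)"
  unfolding cubic_singular_def cubic_polar_def normal_curve_def by (simp; algebra)

lemma cubic_singular_imp_normal_curve:
  assumes "cubic_singular w" and "w \<noteq> 0"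
  obtains l p q where "l \<noteq> 0" "p \<noteq> 0 \<or> q \<noteq> 0" "w = l *\<^sub>R normal_curve p q"
proof -
  have polar_0: "cubic_polar w v = 0" for v using assms(1) by (simp add: cubic_singular_def)
  have e0: "w$2*w$4 - w$3^2 = 0" using polar_0[of "vec5 1 0 0 0 0"] by (simp add: cubic_polar_def)
  have e2: "w$0*w$4 + 2*w$1*w$3 - 3*w$2^2 = 0" using polar_0[of "vec5 0 0 1 0 0"] by (simp add: cubic_polar_def)
  have e3: "2*w$1*w$2 - 2*w$0*w$3 = 0" using polar_0[of "vec5 0 0 0 1 0"] by (simp add: cubic_polar_def)
  have e4: "w$0*w$2 - w$1^2 = 0" using polar_0[of "vec5 0 0 0 0 1"] by (simp add: cubic_polar_def)
  show ?thesis
  proof (cases "w$0 = 0")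
    case True
    have "w$1 = 0" using e4 True by simp
    moreover have "w$2 = 0" using e2 True \<open>w$1 = 0\<close> by simp
    moreover have "w$3 = 0" using e0 \<open>w$2 = 0\<close> by simp
    ultimately have w: "w = w$4 *\<^sub>R normal_curve 0 1"
      using True by (simp add: normal_curve_def vec_eq_iff forall_5)
    moreover have "w$4 \<noteq> 0" using w assms(2) by (metis scale_zero_left)
    ultimately show ?thesis using that[of "w$4" 0 1] by simp
  next
    case False
    define q where "q = w$1 / w$0"
    have w1: "w$1 = w$0 * q" using False by (simp add: q_def)
    have w2: "w$2 = w$0 * q^2" using e4 False unfolding q_def by (simp add: field_simps power2_eq_square)
    have w3: "w$3 = w$0 * q^3" using e3 False w1 w2 by (simp add: field_simps power2_eq_square power3_eq_cube)
    have w4: "w$4 = w$0 * q^4" using e2 False w1 w2 w3 by (simp add: field_simps) algebra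
    have "w = w$0 *\<^sub>R normal_curve 1 q"
      by (simp add: normal_curve_def vec_eq_iff forall_5 w1 w2 w3 w4)
    then show ?thesis using that[of "w$0" 1 q] False by simp
  qed
qed

lemma normal_curve_proportional:
  assumes "q' * p - p' * q = 0" and "p \<noteq> 0 \<or> q \<noteq> 0"
  obtains t where "normal_curve p' q' = t^4 *\<^sub>R normal_curve p q"
proof -
  obtain t where "p' = t * p" "q' = t * q"
  proof (cases "p = 0")
    case True
    with assms have "q \<noteq> 0" "p' = 0" by auto
    with True show ?thesis using that[of "q'/q"] by simp
  next
    case False
    with assms(1) have "q' = p'/p * q" by (simp add: field_simps)
    with False show ?thesis using that[of "p'/p"] by simp
  qed
  then show ?thesis using that normal_curve_mult by metis
qed

lemma rho_mat_normal_curve: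
  "rho_mat a b c d *v normal_curve p q = normal_curve (d*p + b*q) (c*p + a*q)"
  unfolding vec_eq_iff forall_5 matrix_vector_mult_5
  by (simp add: rho_mat_def normal_curve_def; intro conjI; algebra)

lemma cubic_rho_mat: "cubic (rho_mat a b c d *v x) = (a*d - b*c)^6 * cubic x"
  unfolding cubic_def matrix_vector_mult_5 by (simp add: rho_mat_def; algebra)

lemma gq_rho_mat: "gq (rho_mat a b c d *v x) = (a*d - b*c)^4 * gq x"
  unfolding gq_def matrix_vector_mult_5 by (simp add: rho_mat_def; algebra)

lemma cubic_scaleR: "cubic (c *\<^sub>R x) = c^3 * cubic x"
  unfolding cubic_def by (simp; algebra)

lemma gq_scaleR: "gq (c *\<^sub>R x) = c^2 * gq x"
  unfolding gq_def by (simp; algebra)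

section \<open>Linear maps scaling the cubic\<close>

lemma cubic_polar_fixed_direction:
  assumes "\<And>x. cubic (b *v x) = \<kappa> * cubic x" and "b *v w = l *\<^sub>R w"
  shows "l * cubic_polar (b *v x) w = \<kappa> * cubic_polar x w"
proof -
  have "cubic_polar (b *v x) (b *v w) = \<kappa> * cubic_polar x w"
    using cubic_polar_transform[of "(*v) b"] assms(1) by simp
  then show ?thesis using assms(2) by (simp add: cubic_polar_scaleR_right)
qed

lemma matrix_vector_mult_normal_curve_1_0: "((b :: real^5^5) *v normal_curve 1 0) $ i = b$i$0"
  by (simp add: matrix_vector_mult_5 normal_curve_def)

lemma matrix_vector_mult_normal_curve_0_1: "((b :: real^5^5) *v normal_curve 0 1) $ i = b$i$4"
  by (simp add: matrix_vector_mult_5 normal_curve_def)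

lemma stabilizer_lower_rows:
  fixes b :: "real^5^5"
  assumes quadric: "\<And>x. l * cubic_polar (b *v x) (normal_curve 1 0) = \<kappa> * cubic_polar x (normal_curve 1 0)"
    and col4: "b *v normal_curve 0 1 = m *\<^sub>R normal_curve 0 1"
    and "l \<noteq> 0" "m \<noteq> 0" "\<kappa> \<noteq> 0"
  shows "b$2$1 = 0" "b$2$3 = 0" "b$3$1 = 0" "b$4$1 = 0" "b$2$2 \<noteq> 0" "b$3$3 \<noteq> 0"
    "b$2$2 * b$4$2 = (b$3$2)^2" "b$2$2 * b$4$3 = 2 * b$3$2 * b$3$3"
proof -
  have col4_entries: "b$2$4 = 0" "b$3$4 = 0" "b$4$4 = m"
    using col4 matrix_vector_mult_normal_curve_0_1[of b]
    by (simp_all add: vec_eq_iff forall_5 normal_curve_def)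
  have quadric_expanded:
    "l * ((b *v x)$2 * (b *v x)$4 - ((b *v x)$3)^2) = \<kappa> * (x$2 * x$4 - (x$3)^2)" for x
    using quadric[of x] by (simp add: cubic_polar_def normal_curve_def)
  have Q: "l * ((b$2$1*x$1 + b$2$2*x$2 + b$2$3*x$3) * (b$4$1*x$1 + b$4$2*x$2 + b$4$3*x$3 + m*x$4)
      - (b$3$1*x$1 + b$3$2*x$2 + b$3$3*x$3)^2) = \<kappa> * (x$2 * x$4 - (x$3)^2)" if "x$0 = 0" for x :: "real^5"
    using quadric_expanded[of x] that col4_entries by (simp add: matrix_vector_mult_5)
  have "l * m * b$2$1 = 0"
    using Q[of "vec5 0 1 0 0 1"] Q[of "vec5 0 1 0 0 0"] Q[of "vec5 0 0 0 0 1"]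
    by (simp only: vec5_nth power2_eq_square) algebra
  then show b21: "b$2$1 = 0" using assms by simp
  have "l * m * b$2$3 = 0"
    using Q[of "vec5 0 0 0 1 1"] Q[of "vec5 0 0 0 1 0"] Q[of "vec5 0 0 0 0 1"]
    by (simp only: vec5_nth power2_eq_square) algebra
  then show b23: "b$2$3 = 0" using assms by simp
  have "l * m * b$2$2 = \<kappa>"
    using Q[of "vec5 0 0 1 0 1"] Q[of "vec5 0 0 1 0 0"] Q[of "vec5 0 0 0 0 1"]
    by (simp only: vec5_nth power2_eq_square) algebra
  then show b22: "b$2$2 \<noteq> 0" using assms by auto
  have "l * (b$3$1)^2 = 0" using Q[of "vec5 0 1 0 0 0"] b21 by simp
  then show b31: "b$3$1 = 0" using assms by simp
  have "l * b$2$2 * b$4$1 = 0"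
    using Q[of "vec5 0 1 1 0 0"] Q[of "vec5 0 1 0 0 0"] Q[of "vec5 0 0 1 0 0"] b21 b31
    by (simp only: vec5_nth power2_eq_square) algebra
  then show "b$4$1 = 0" using assms b22 by simp
  have "l * (b$3$3)^2 = \<kappa>" using Q[of "vec5 0 0 0 1 0"] b23 by simp
  then show "b$3$3 \<noteq> 0" using assms by auto
  have "l * (b$2$2 * b$4$2 - (b$3$2)^2) = 0"
    using Q[of "vec5 0 0 1 0 0"] by (simp only: vec5_nth power2_eq_square) algebra
  then show "b$2$2 * b$4$2 = (b$3$2)^2" using assms by simp
  have "l * (b$2$2 * b$4$3 - 2 * b$3$2 * b$3$3) = 0"
    using Q[of "vec5 0 0 1 1 0"] Q[of "vec5 0 0 1 0 0"] Q[of "vec5 0 0 0 1 0"] b23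
    by (simp only: vec5_nth power2_eq_square) algebra
  then show "b$2$2 * b$4$3 = 2 * b$3$2 * b$3$3" using assms by simp
qed

lemma stabilizer_upper_rows:
  fixes b :: "real^5^5"
  assumes quadric: "\<And>x. m * cubic_polar (b *v x) (normal_curve 0 1) = \<kappa> * cubic_polar x (normal_curve 0 1)"
    and col0: "b *v normal_curve 1 0 = l *\<^sub>R normal_curve 1 0"
    and "l \<noteq> 0" "m \<noteq> 0" "\<kappa> \<noteq> 0"
  shows "b$2$3 = 0" "b$2$1 = 0" "b$1$3 = 0" "b$0$3 = 0" "b$2$2 \<noteq> 0" "b$1$1 \<noteq> 0"
    "b$2$2 * b$0$2 = (b$1$2)^2" "b$2$2 * b$0$1 = 2 * b$1$2 * b$1$1"
proof -
  have col0_entries: "b$0$0 = l" "b$1$0 = 0" "b$2$0 = 0"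
    using col0 matrix_vector_mult_normal_curve_1_0[of b]
    by (simp_all add: vec_eq_iff forall_5 normal_curve_def)
  have quadric_expanded:
    "m * ((b *v x)$0 * (b *v x)$2 - ((b *v x)$1)^2) = \<kappa> * (x$0 * x$2 - (x$1)^2)" for x
    using quadric[of x] by (simp add: cubic_polar_def normal_curve_def)
  have Q: "m * ((l*x$0 + b$0$1*x$1 + b$0$2*x$2 + b$0$3*x$3) * (b$2$1*x$1 + b$2$2*x$2 + b$2$3*x$3)
      - (b$1$1*x$1 + b$1$2*x$2 + b$1$3*x$3)^2) = \<kappa> * (x$0 * x$2 - (x$1)^2)" if "x$4 = 0" for x :: "real^5"
    using quadric_expanded[of x] that col0_entries by (simp add: matrix_vector_mult_5)
  have "l * m * b$2$3 = 0"
    using Q[of "vec5 1 0 0 1 0"] Q[of "vec5 0 0 0 1 0"] Q[of "vec5 1 0 0 0 0"]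
    by (simp only: vec5_nth power2_eq_square) algebra
  then show b23: "b$2$3 = 0" using assms by simp
  have "l * m * b$2$1 = 0"
    using Q[of "vec5 1 1 0 0 0"] Q[of "vec5 0 1 0 0 0"] Q[of "vec5 1 0 0 0 0"]
    by (simp only: vec5_nth power2_eq_square) algebra
  then show b21: "b$2$1 = 0" using assms by simp
  have "l * m * b$2$2 = \<kappa>"
    using Q[of "vec5 1 0 1 0 0"] Q[of "vec5 0 0 1 0 0"] Q[of "vec5 1 0 0 0 0"]
    by (simp only: vec5_nth power2_eq_square) algebra
  then show b22: "b$2$2 \<noteq> 0" using assms by auto
  have "m * (b$1$3)^2 = 0" using Q[of "vec5 0 0 0 1 0"] b23 by simp
  then show b13: "b$1$3 = 0" using assms by simp
  have "m * b$2$2 * b$0$3 = 0"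
    using Q[of "vec5 0 0 1 1 0"] Q[of "vec5 0 0 0 1 0"] Q[of "vec5 0 0 1 0 0"] b23 b13
    by (simp only: vec5_nth power2_eq_square) algebra
  then show "b$0$3 = 0" using assms b22 by simp
  have "m * (b$1$1)^2 = \<kappa>" using Q[of "vec5 0 1 0 0 0"] b21 by simp
  then show "b$1$1 \<noteq> 0" using assms by auto
  have "m * (b$2$2 * b$0$2 - (b$1$2)^2) = 0"
    using Q[of "vec5 0 0 1 0 0"] by (simp only: vec5_nth power2_eq_square) algebra
  then show "b$2$2 * b$0$2 = (b$1$2)^2" using assms by simp
  have "m * (b$2$2 * b$0$1 - 2 * b$1$2 * b$1$1) = 0"
    using Q[of "vec5 0 1 1 0 0"] Q[of "vec5 0 1 0 0 0"] Q[of "vec5 0 0 1 0 0"] b21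
    by (simp only: vec5_nth power2_eq_square) algebra
  then show "b$2$2 * b$0$1 = 2 * b$1$2 * b$1$1" using assms by simp
qed

lemma cubic_stabilizer_diagonal:
  fixes b :: "real^5^5"
  assumes scales: "\<And>x. cubic (b *v x) = \<kappa> * cubic x"
    and col0: "b *v normal_curve 1 0 = l *\<^sub>R normal_curve 1 0"
    and col4: "b *v normal_curve 0 1 = m *\<^sub>R normal_curve 0 1"
    and nonzero: "l \<noteq> 0" "m \<noteq> 0" "\<kappa> \<noteq> 0"
  shows "b = diag5 l (b$1$1) (b$2$2) (b$3$3) m"
proof -
  note lower = stabilizer_lower_rows[OF cubic_polar_fixed_direction[OF scales col0] col4 nonzero]
  note upper = stabilizer_upper_rows[OF cubic_polar_fixed_direction[OF scales col4] col0 nonzero]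
  have col_entries: "b$0$0 = l" "b$1$0 = 0" "b$2$0 = 0" "b$3$0 = 0" "b$4$0 = 0"
    "b$0$4 = 0" "b$1$4 = 0" "b$2$4 = 0" "b$3$4 = 0" "b$4$4 = m"
    using col0 col4 matrix_vector_mult_normal_curve_1_0[of b] matrix_vector_mult_normal_curve_0_1[of b]
    by (simp_all add: vec_eq_iff forall_5 normal_curve_def)
  have on_line: "b$0$1 * (b$3$3)^2 * t^2 + b$4$3 * (b$1$1)^2 * t = 0" for t
  proof -
    have "cubic (b *v vec5 0 1 0 t 0) = 0"
      using scales[of "vec5 0 1 0 t 0"] by (simp add: cubic_def)
    then show ?thesis
      using col_entries lower upper by (simp add: cubic_def matrix_vector_mult_5 power2_eq_square) argo
  qed
  have "b$0$1 * (b$3$3)^2 + b$4$3 * (b$1$1)^2 = 0" "b$0$1 * (b$3$3)^2 - b$4$3 * (b$1$1)^2 = 0"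
    using on_line[of 1] on_line[of "-1"] by simp_all
  then have "b$0$1 * (b$3$3)^2 = 0" "b$4$3 * (b$1$1)^2 = 0" by linarith+
  then have "b$0$1 = 0" "b$4$3 = 0" using lower upper by simp_all
  then have "b$1$2 = 0" "b$3$2 = 0" using lower upper by simp_all
  then have "b$0$2 = 0" "b$4$2 = 0" using lower upper by simp_all
  then show ?thesis
    using col_entries lower upper \<open>b$0$1 = 0\<close> \<open>b$4$3 = 0\<close> \<open>b$1$2 = 0\<close> \<open>b$3$2 = 0\<close>
    by (simp add: vec_eq_iff forall_5 diag5_def)
qed

lemma diag5_mult_vector:
  "diag5 d0 d1 d2 d3 d4 *v x = vec5 (d0 * x$0) (d1 * x$1) (d2 * x$2) (d3 * x$3) (d4 * x$4)"
  unfolding vec_eq_iff forall_5 by (simp add: matrix_vector_mult_5 diag5_def)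

lemma diag5_cubic_similarity_geometric:
  assumes scales: "\<And>x. cubic (diag5 d0 d1 d2 d3 d4 *v x) = \<kappa> * cubic x" and "\<kappa> \<noteq> 0"
  shows "d0 \<noteq> 0" "d1 \<noteq> 0"
    "d2 = d0 * (d1/d0)^2" "d3 = d0 * (d1/d0)^3" "d4 = d0 * (d1/d0)^4"
proof -
  have at: "cubic (vec5 (d0 * x0) (d1 * x1) (d2 * x2) (d3 * x3) (d4 * x4)) = \<kappa> * cubic (vec5 x0 x1 x2 x3 x4)"
    for x0 x1 x2 x3 x4
    using scales[of "vec5 x0 x1 x2 x3 x4"] by (simp add: diag5_mult_vector)
  have k024: "d0 * d2 * d4 = d2^3" using at[of 1 0 1 0 1] by (simp add: cubic_def)
  have k123: "2 * d1 * d2 * d3 - d2^3 = \<kappa>" using at[of 0 1 1 1 0] by (simp add: cubic_def)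
  have k2: "d2^3 = \<kappa>" using at[of 0 0 1 0 0] by (simp add: cubic_def)
  have k03: "d0 * d3^2 = \<kappa>" using at[of 1 0 0 1 0] by (simp add: cubic_def)
  have k14: "d4 * d1^2 = \<kappa>" using at[of 0 1 0 0 1] by (simp add: cubic_def)
  show "d0 \<noteq> 0" "d1 \<noteq> 0" using k03 k14 \<open>\<kappa> \<noteq> 0\<close> by auto
  have "d2 \<noteq> 0" "d4 \<noteq> 0" using k2 k14 \<open>\<kappa> \<noteq> 0\<close> by auto
  have d04: "d0 * d4 = d2^2" using k024 \<open>d2 \<noteq> 0\<close> by (simp add: power3_eq_cube power2_eq_square)
  have d13: "d1 * d3 = d2^2"
  proof -
    have "d2 * (d1 * d3) = d2 * d2^2" using k123 k2 by (simp add: power3_eq_cube power2_eq_square algebra_simps)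
    then show ?thesis using \<open>d2 \<noteq> 0\<close> by simp
  qed
  have d02: "d0 * d2 = d1^2"
  proof -
    have "d4 * (d0 * d2) = d4 * d1^2" using k024 k2 k14 by (metis mult.commute mult.assoc)
    then show ?thesis using \<open>d4 \<noteq> 0\<close> by simp
  qed
  show d2: "d2 = d0 * (d1/d0)^2" using d02 \<open>d0 \<noteq> 0\<close> by (simp add: field_simps power2_eq_square)
  show "d3 = d0 * (d1/d0)^3" using d13 d2 \<open>d0 \<noteq> 0\<close> \<open>d1 \<noteq> 0\<close>
    by (simp add: field_simps power2_eq_square power3_eq_cube)
  show "d4 = d0 * (d1/d0)^4" using d04 d2 \<open>d0 \<noteq> 0\<close>
    by (simp add: field_simps power2_eq_square power4_eq_xxxx)
qed

lemma diag5_geometric_eq_rho_mat: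
  assumes "d \<noteq> 0" and "\<rho> \<noteq> 0"
  obtains c r s where "c \<in> {1, -1}" "r \<noteq> 0" "s \<noteq> 0"
    "diag5 d (d * \<rho>) (d * \<rho>^2) (d * \<rho>^3) (d * \<rho>^4) = c *\<^sub>R rho_mat r 0 0 s"
proof -
  define s where "s = root 4 \<bar>d\<bar>"
  have d: "d = sgn d * s^4" by (simp add: s_def sgn_mult_abs)
  have "s \<noteq> 0" using assms(1) by (simp add: s_def)
  moreover have "diag5 e (e * \<rho>) (e * \<rho>^2) (e * \<rho>^3) (e * \<rho>^4) = c *\<^sub>R rho_mat (s * \<rho>) 0 0 s"
    if "e = c * s^4" for c e
    using that by (simp add: rho_mat_diagonal vec_eq_iff forall_5 diag5_def power_mult_distrib mult_ac
        flip: power_Suc)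
  note this[OF d]
  moreover have "sgn d \<in> {1, -1}" using assms(1) by (simp add: sgn_real_def)
  ultimately show ?thesis using that assms(2) by (metis mult_eq_0_iff)
qed

lemma cubic_stabilizer_eq_rho_mat:
  fixes b :: "real^5^5"
  assumes scales: "\<And>x. cubic (b *v x) = \<kappa> * cubic x"
    and "b *v normal_curve 1 0 = l *\<^sub>R normal_curve 1 0"
    and "b *v normal_curve 0 1 = m *\<^sub>R normal_curve 0 1"
    and "l \<noteq> 0" "m \<noteq> 0" "\<kappa> \<noteq> 0"
  obtains c r s where "c \<in> {1, -1}" "r \<noteq> 0" "s \<noteq> 0" "b = c *\<^sub>R rho_mat r 0 0 s"
proof -
  obtain d1 d2 d3 where diag: "b = diag5 l d1 d2 d3 m"
    using cubic_stabilizer_diagonal[OF assms] by blast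
  then have "cubic (diag5 l d1 d2 d3 m *v x) = \<kappa> * cubic x" for x
    using scales by simp
  note geometric = diag5_cubic_similarity_geometric[OF this \<open>\<kappa> \<noteq> 0\<close>]
  then have "d1 = l * (d1/l)" "d1/l \<noteq> 0" by simp_all
  then show ?thesis
    using diag5_geometric_eq_rho_mat[of l "d1/l"] geometric diag that by metis
qed

lemma cubic_similarity_normal_curve_image:
  fixes a :: "real^5^5"
  assumes "bij ((*v) a)" and scales: "\<And>x. cubic (a *v x) = k * cubic x" and "normal_curve u v \<noteq> 0"
  obtains l p q where "l \<noteq> 0" "p \<noteq> 0 \<or> q \<noteq> 0" "a *v normal_curve u v = l *\<^sub>R normal_curve p q"
proof -
  have "cubic_singular (a *v normal_curve u v)"
    using cubic_singular_image[of "(*v) a", OF _ _ scales cubic_singular_normal_curve] assms(1)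
    by (simp add: bij_is_surj)
  moreover have "a *v normal_curve u v \<noteq> 0"
    using assms(1,3) bij_is_inj[of "(*v) a"] by (metis injD matrix_vector_mult_0_right)
  ultimately show ?thesis using cubic_singular_imp_normal_curve that by blast
qed

lemma normal_curve_images_independent:
  fixes a :: "real^5^5"
  assumes "inj ((*v) a)"
    and e0: "a *v normal_curve 1 0 = l *\<^sub>R normal_curve p q" and "l \<noteq> 0" "p \<noteq> 0 \<or> q \<noteq> 0"
    and e4: "a *v normal_curve 0 1 = m *\<^sub>R normal_curve p' q'"
  shows "q' * p - p' * q \<noteq> 0"
proof
  assume "q' * p - p' * q = 0"
  then obtain t where t: "normal_curve p' q' = t^4 *\<^sub>R normal_curve p q"
    using normal_curve_proportional assms(4) by blast
  have "a *v ((m * t^4 / l) *\<^sub>R normal_curve 1 0) = (m * t^4 / l) *\<^sub>R (l *\<^sub>R normal_curve p q)"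
    by (simp add: matrix_vector_mult_scaleR e0)
  also have "\<dots> = a *v normal_curve 0 1"
    using e4 \<open>l \<noteq> 0\<close> t by simp
  finally have "a *v normal_curve 0 1 = a *v ((m * t^4 / l) *\<^sub>R normal_curve 1 0)" ..
  then have "normal_curve 0 1 = (m * t^4 / l) *\<^sub>R normal_curve 1 0"
    by (rule injD[OF assms(1)])
  from arg_cong[OF this, of "\<lambda>x. x $ 4"] show False
    by (simp add: normal_curve_def)
qed

lemma cubic_similarity_eq_rho:
  fixes a :: "real^5^5"
  assumes "det a \<noteq> 0" and "k \<noteq> 0" and scales: "\<And>x. cubic (a *v x) = k * cubic x"
  obtains c A where "c \<in> {1, -1}" "A \<in> GL2" "a = c *\<^sub>R rho A"
proof -
  have bij: "bij ((*v) a)" using assms(1) invertible_det_nz invertible_eq_bij by blast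
  have "normal_curve 1 0 $ 0 = 1" "normal_curve 0 1 $ 4 = 1" by (simp_all add: normal_curve_def)
  then have "normal_curve 1 0 \<noteq> 0" "normal_curve 0 1 \<noteq> 0" by (metis zero_index zero_neq_one)+
  then obtain l p q m p' q' where
    "l \<noteq> 0" "p \<noteq> 0 \<or> q \<noteq> 0" and e0: "a *v normal_curve 1 0 = l *\<^sub>R normal_curve p q" and
    "m \<noteq> 0" and e4: "a *v normal_curve 0 1 = m *\<^sub>R normal_curve p' q'"
    using cubic_similarity_normal_curve_image[OF bij scales] by metis
  define \<Delta> where "\<Delta> = q' * p - p' * q"
  have "\<Delta> \<noteq> 0"
    unfolding \<Delta>_def using normal_curve_images_independent bij bij_is_inj e0 e4 \<open>l \<noteq> 0\<close> \<open>p \<noteq> 0 \<or> q \<noteq> 0\<close>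
    by blast
  \<comment> \<open>\<open>M\<close> maps the lines of \<open>x^0\<close> and \<open>x^4\<close> to their images under \<open>a\<close>, so \<open>b = M\<inverse> a\<close>
    stabilizes both lines.\<close>
  define M where "M = rho_mat q' p' q p"
  define N where "N = rho_mat (p/\<Delta>) (-p'/\<Delta>) (-q/\<Delta>) (q'/\<Delta>)"
  have NM: "N ** M = mat 1"
    unfolding N_def M_def by (rule rho_mat_inverse[OF \<Delta>_def \<open>\<Delta> \<noteq> 0\<close>])
  then have MN: "M ** N = mat 1" using matrix_left_right_inverse by blast
  define b where "b = N ** a"
  have b_fixes: "b *v w = t *\<^sub>R w" if "a *v w = t *\<^sub>R (M *v w)" for w t
  proof -
    have "b *v w = N *v (a *v w)" by (simp add: b_def matrix_vector_mul_assoc)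
    also have "\<dots> = t *\<^sub>R ((N ** M) *v w)"
      using that by (simp add: matrix_vector_mult_scaleR matrix_vector_mul_assoc)
    finally show ?thesis using NM by simp
  qed
  have fixes_lines: "b *v normal_curve 1 0 = l *\<^sub>R normal_curve 1 0"
    "b *v normal_curve 0 1 = m *\<^sub>R normal_curve 0 1"
    using e0 e4 by (simp_all add: b_fixes M_def rho_mat_normal_curve)
  have "(p/\<Delta>) * (q'/\<Delta>) - (-p'/\<Delta>) * (-q/\<Delta>) = \<Delta> / (\<Delta> * \<Delta>)"
    by (simp add: \<Delta>_def diff_divide_distrib mult.commute)
  then have "(p/\<Delta>) * (q'/\<Delta>) - (-p'/\<Delta>) * (-q/\<Delta>) = 1/\<Delta>"
    using \<open>\<Delta> \<noteq> 0\<close> by simp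
  then have b_scales: "cubic (b *v x) = ((1/\<Delta>)^6 * k) * cubic x" for x
    by (simp add: b_def N_def matrix_vector_mul_assoc[symmetric] cubic_rho_mat scales)
  have "(1/\<Delta>)^6 * k \<noteq> 0" using \<open>\<Delta> \<noteq> 0\<close> \<open>k \<noteq> 0\<close> by simp
  then obtain c r s where "c \<in> {1, -1}" "r \<noteq> 0" "s \<noteq> 0" and b: "b = c *\<^sub>R rho_mat r 0 0 s"
    using cubic_stabilizer_eq_rho_mat[OF b_scales fixes_lines \<open>l \<noteq> 0\<close> \<open>m \<noteq> 0\<close>] by blast
  have "a = M ** b" by (simp add: b_def matrix_mul_assoc MN)
  also have "\<dots> = c *\<^sub>R rho (mat2 (r*q') (r*p') (s*q) (s*p))"
    by (simp add: b M_def matrix_scalar_ac rho_mat_mult rho_mat2 flip: scalar_matrix_assoc)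
  finally have "a = c *\<^sub>R rho (mat2 (r*q') (r*p') (s*q) (s*p))" .
  moreover have "mat2 (r*q') (r*p') (s*q) (s*p) \<in> GL2"
    using \<open>r \<noteq> 0\<close> \<open>s \<noteq> 0\<close> \<open>\<Delta> \<noteq> 0\<close> by (simp add: GL2_def det_mat2 \<Delta>_def algebra_simps)
  ultimately show ?thesis using \<open>c \<in> {1, -1}\<close> that by blast
qed

lemma sign_scaled_rho_in_CH_and_CO32:
  assumes "A \<in> GL2" and "c \<in> {1, -1}"
  shows "c *\<^sub>R rho A \<in> CH" "c *\<^sub>R rho A \<in> CO32"
proof -
  define \<Delta> where "\<Delta> = A$0$0 * A$1$1 - A$0$1 * A$1$0"
  have "\<Delta> \<noteq> 0" using assms(1) by (simp add: GL2_def det_2x2 \<Delta>_def)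
  have "c \<noteq> 0" using assms(2) by auto
  have rho_A: "rho A = rho_mat (A$0$0) (A$0$1) (A$1$0) (A$1$1)" by (rule rho_eq_rho_mat)
  have det: "det (c *\<^sub>R rho A) = c^5 * \<Delta>^10"
    by (simp add: det_scaleR rho_A det_rho_mat \<Delta>_def)
  have "(c^5 * \<Delta>^10)^3 = (c^3 * \<Delta>^6)^5" by algebra
  then have "root 5 ((det (c *\<^sub>R rho A))^3) = c^3 * \<Delta>^6"
    unfolding det by (simp add: odd_real_root_power_cancel)
  moreover have "Ups ((c *\<^sub>R rho A) *v x) = c^3 * \<Delta>^6 * Ups x" for x
    by (simp add: Ups_eq_cubic cubic_scaleR rho_A cubic_rho_mat \<Delta>_def flip: scaleR_matrix_vector_assoc)
  ultimately show "c *\<^sub>R rho A \<in> CH"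
    unfolding CH_def using det \<open>c \<noteq> 0\<close> \<open>\<Delta> \<noteq> 0\<close> by simp
  have "gq ((c *\<^sub>R rho A) *v x) = (c^2 * \<Delta>^4) * gq x" for x
    by (simp add: gq_scaleR rho_A gq_rho_mat \<Delta>_def flip: scaleR_matrix_vector_assoc)
  moreover have "c^2 * \<Delta>^4 > 0" using \<open>c \<noteq> 0\<close> \<open>\<Delta> \<noteq> 0\<close> by simp
  ultimately show "c *\<^sub>R rho A \<in> CO32"
    unfolding CO32_def using det \<open>c \<noteq> 0\<close> \<open>\<Delta> \<noteq> 0\<close> by (auto intro!: exI[of _ "c^2 * \<Delta>^4"])
qed

lemma CH_imp_sign_scaled_rho:
  assumes "a \<in> CH"
  obtains c A where "c \<in> {1, -1}" "A \<in> GL2" "a = c *\<^sub>R rho A"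
proof (rule cubic_similarity_eq_rho)
  show "det a \<noteq> 0" and "root 5 ((det a)^3) \<noteq> 0" using assms by (simp_all add: CH_def)
  show "cubic (a *v x) = root 5 ((det a)^3) * cubic x" for x
    using assms by (simp add: CH_def Ups_eq_cubic)
qed (use that in blast)

theorem proposition2p1:
  shows "CH = {c *\<^sub>R rho A | c A. c \<in> {1, -1} \<and> A \<in> GL2}
         \<and> CH \<subseteq> CO32 \<and> CO32 \<subseteq> GL5"
proof (intro conjI)
  show "CH = {c *\<^sub>R rho A | c A. c \<in> {1, -1} \<and> A \<in> GL2}"
    using CH_imp_sign_scaled_rho sign_scaled_rho_in_CH_and_CO32(1) by blast
  show "CH \<subseteq> CO32"
    using CH_imp_sign_scaled_rho sign_scaled_rho_in_CH_and_CO32(2) by blast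
  show "CO32 \<subseteq> GL5" by (auto simp: CO32_def GL5_def)
qed

end
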